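(* Let $n,m\ge 1$, let $G\in\mathbb{R}^{2n\times 2n}$ be symmetric, let $C\in\mathbb{R}^{2m\times 2n}$, set $A=\Sigma_n(G+C^\top\Sigma_m C/2)$, and let $\mathcal{C}=(\Sigma_n C^\top\Sigma_m, A\Sigma_n C^\top\Sigma_m,\ldots,A^{2n-1}\Sigma_n C^\top\Sigma_m)$ and $\mathcal{O}=(C^\top, A^\top C^\top,\ldots,(A^\top)^{2n-1}C^\top)^\top$. Then the linear quantum system determined by $(G,C)$ has a decoherence-free (DF) subsystem if and only if $$\mathrm{Ker}(\mathcal{O})\cap\mathrm{Ker}(\mathcal{O}\Sigma_n)\neq\{0\}.$$ Moreover, in that case there always exists a real $2n\times 2\ell$ matrix $T_1$ ($\ell\ge1$) with $\mathrm{Range}(T_1)=\mathrm{Ker}(\mathcal{O})\cap\mathrm{Ker}(\mathcal{O}\Sigma_n)$ and $T_1^\top\Sigma_n T_1=\Sigma_\ell$, and $\hat x_{\rm DF}=T_1^\top\hat x$ is a DF mode.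
   Context: For $k\ge1$, $\Sigma_k=\mathrm{diag}\{\Sigma,\ldots,\Sigma\}$ ($2k\times 2k$) with $\Sigma=\begin{pmatrix}0&1\\-1&0\end{pmatrix}$. The linear quantum system determined by $(G,C)$ is $d\hat x=A\hat x\,dt+\Sigma_nC^\top\Sigma_m\,d\hat{\mathcal W}$ with output $d\hat{\mathcal W}^{\rm out}=C\hat x\,dt+d\hat{\mathcal W}$, where $\hat x=(\hat q_1,\hat p_1,\ldots,\hat q_n,\hat p_n)^\top$ satisfies the canonical commutation relation $\hat x\hat x^\top-(\hat x\hat x^\top)^\top=i\Sigma_n$, $\hat{\mathcal W}$ is the vector of input noise quadratures and $\hat{\mathcal W}^{\rm out}$ that of the output. Definition: the system has a DF subsystem if there is a subsystem, with variable $\hat x_{\rm DF}=T^\top\hat x$ for a real matrix $T$ with nonzero columns, that is (i) uncontrollable with respect to $\hat{\mathcal W}$ and unobservable with respect to $\hat{\mathcal W}^{\rm out}$, i.e. the columns of $T$ lie in $\mathrm{Ker}(\mathcal{C}^\top)\cap\mathrm{Ker}(\mathcal{O})$ (equivalently $\mathrm{Ker}(\mathcal{C}^\top)\cap\mathrm{Ker}(\mathcal{O})$ is nontrivial), and (ii) whose variable satisfies the canonical commutation relation, i.e. $T^\top\Sigma_nT=\Sigma_\ell$ for some $\ell\ge1$; such $\hat x_{\rm DF}$ is called a DF mode. *)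

theory Defs
  imports Complex_Main "Jordan_Normal_Form.Matrix_Kernel"
begin

text \<open>Sigma_k = diag(Sigma,...,Sigma), a 2k x 2k real matrix, Sigma = [[0,1],[-1,0]].\<close>
definition Sigma_mat :: "nat \<Rightarrow> real mat" where
  "Sigma_mat k = mat (2*k) (2*k) (\<lambda>(i,j).
      if even i \<and> j = i + 1 then 1
      else if odd i \<and> j + 1 = i then -1 else 0)"

definition drift_mat :: "nat \<Rightarrow> nat \<Rightarrow> real mat \<Rightarrow> real mat \<Rightarrow> real mat" where
  "drift_mat n m G C = Sigma_mat n * (G + (1/2) \<cdot>\<^sub>m (transpose_mat C * Sigma_mat m * C))"

definition input_mat :: "nat \<Rightarrow> nat \<Rightarrow> real mat \<Rightarrow> real mat" where
  "input_mat n m C = Sigma_mat n * transpose_mat C * Sigma_mat m"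

text \<open>Controllability matrix (B, AB, ..., A^(2n-1) B), of size 2n x (2n * 2m).\<close>
definition ctrb_mat :: "nat \<Rightarrow> nat \<Rightarrow> real mat \<Rightarrow> real mat \<Rightarrow> real mat" where
  "ctrb_mat n m G C = mat (2*n) (2*n * (2*m)) (\<lambda>(i,j).
      ((drift_mat n m G C ^\<^sub>m (j div (2*m))) * input_mat n m C) $$ (i, j mod (2*m)))"

text \<open>Observability matrix (C^T, A^T C^T, ..., (A^T)^(2n-1) C^T)^T, i.e. block rows
  C, C A, ..., C A^(2n-1); size (2n * 2m) x 2n.\<close>
definition obsv_mat :: "nat \<Rightarrow> nat \<Rightarrow> real mat \<Rightarrow> real mat \<Rightarrow> real mat" where
  "obsv_mat n m G C = mat (2*n * (2*m)) (2*n) (\<lambda>(i,j).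
      (C * (drift_mat n m G C ^\<^sub>m (i div (2*m)))) $$ (i mod (2*m), j))"

definition mat_range :: "real mat \<Rightarrow> real vec set" where
  "mat_range T = {T *\<^sub>v w | w. w \<in> carrier_vec (dim_col T)}"

definition is_DF_mode :: "nat \<Rightarrow> nat \<Rightarrow> real mat \<Rightarrow> real mat \<Rightarrow> nat \<Rightarrow> real mat \<Rightarrow> bool" where
  "is_DF_mode n m G C l T \<longleftrightarrow>
     l \<ge> 1 \<and> T \<in> carrier_mat (2*n) (2*l) \<and>
     (\<forall>j < 2*l. col T j \<noteq> 0\<^sub>v (2*n) \<and>
        col T j \<in> mat_kernel (transpose_mat (ctrb_mat n m G C)) \<inter> mat_kernel (obsv_mat n m G C)) \<and>
     transpose_mat T * Sigma_mat n * T = Sigma_mat l"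

definition has_DF_subsystem :: "nat \<Rightarrow> nat \<Rightarrow> real mat \<Rightarrow> real mat \<Rightarrow> bool" where
  "has_DF_subsystem n m G C \<longleftrightarrow> (\<exists>l T. is_DF_mode n m G C l T)"

end

theory Submission
  imports Defs
begin

text \<open>
  Write S = Sigma_n and P = C^T Sigma_m C, so that A = S (G + P/2) with G symmetric and P
  skew-symmetric.  On vectors w whose S-image is annihilated by C the coupling term drops out and
  S A^T w = - A S w.  Since the input matrix satisfies B^T = Sigma_m C S, the conditions
  C S (A^T)^q v = 0 (q < 2n) defining Ker(ctrb^T) therefore propagate inductively into
  C A^q S v = 0 (q < 2n), i.e. Ker(ctrb^T) = Ker(obsv S).  Hence the DF kernel
  K = Ker(obsv) \<inter> Ker(obsv S) is invariant under S.  As S is orthogonal and skew, a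
  Gram-Schmidt procedure that adjoins each new unit vector x of K together with - S x produces
  an orthonormal basis of K whose matrix T satisfies S T = T Sigma_l, hence T^T S T = Sigma_l:
  its columns form a DF mode.  Conversely, any column of a DF mode is a nonzero vector of K.
\<close>

lemma mult_mat_vec_zero_vec:
  "A \<in> carrier_mat nr nc \<Longrightarrow> A *\<^sub>v 0\<^sub>v nc = (0\<^sub>v nr :: 'a :: semiring_0 vec)"
  by (intro eq_vecI) auto

lemma mult_mat_vec_uminus:
  "A \<in> carrier_mat nr nc \<Longrightarrow> v \<in> carrier_vec nc \<Longrightarrow>
    A *\<^sub>v (- v) = - (A *\<^sub>v (v :: 'a :: ring vec))"
  by (intro eq_vecI) auto

lemma smult_mat_mult_vec:
  "X \<in> carrier_mat nr nc \<Longrightarrow> v \<in> carrier_vec nc \<Longrightarrow>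
    (c \<cdot>\<^sub>m X) *\<^sub>v v = c \<cdot>\<^sub>v (X *\<^sub>v v)"
  by (intro eq_vecI) (auto simp: scalar_prod_def sum_distrib_left ac_simps)

lemma smult_vec_eq_0_iff:
  "(c :: 'a :: field) \<noteq> 0 \<Longrightarrow> v \<in> carrier_vec N \<Longrightarrow> c \<cdot>\<^sub>v v = 0\<^sub>v N \<longleftrightarrow> v = 0\<^sub>v N"
  by (auto simp: vec_eq_iff)

lemma transpose_smult_mat: "transpose_mat (c \<cdot>\<^sub>m X) = c \<cdot>\<^sub>m transpose_mat X"
  by (intro eq_matI) auto

lemma mult_mat_vec_unit_vec:
  assumes "(A :: 'a :: semiring_1 mat) \<in> carrier_mat nr nc" and "j < nc"
  shows "A *\<^sub>v unit_vec nc j = col A j"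
  using assms by (intro eq_vecI) (auto simp: scalar_prod_right_unit[of _ nc])

lemma pow_mat_Suc_left:
  assumes "X \<in> carrier_mat N N"
  shows "X ^\<^sub>m Suc k = X * X ^\<^sub>m k"
proof (induction k)
  case (Suc k)
  have "X ^\<^sub>m Suc (Suc k) = (X * X ^\<^sub>m k) * X" using Suc by simp
  also have "\<dots> = X * X ^\<^sub>m Suc k" using assms by (simp add: assoc_mult_mat[of _ N N _ N _ N])
  finally show ?case .
qed (use assms in simp)

lemma pow_mat_Suc_mult_vec:
  "X \<in> carrier_mat N N \<Longrightarrow> v \<in> carrier_vec N \<Longrightarrow>
    X ^\<^sub>m Suc q *\<^sub>v v = X ^\<^sub>m q *\<^sub>v (X *\<^sub>v v)"
  by (simp add: assoc_mult_mat_vec[of _ N N])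

lemma transpose_pow_mat:
  assumes "(X :: 'a :: comm_semiring_1 mat) \<in> carrier_mat N N"
  shows "transpose_mat (X ^\<^sub>m k) = transpose_mat X ^\<^sub>m k"
proof (induction k)
  case (Suc k)
  have "transpose_mat (X ^\<^sub>m Suc k) = transpose_mat (X * X ^\<^sub>m k)"
    by (simp only: pow_mat_Suc_left[OF assms])
  also have "\<dots> = transpose_mat X ^\<^sub>m Suc k"
    using Suc by (simp add: transpose_mult[OF assms pow_carrier_mat[OF assms]] pow_mat_Suc_left)
  finally show ?case .
qed (use assms in simp)

lemma all_less_mult_div_mod:
  fixes N b :: nat
  shows "(\<forall>i<N*b. P (i div b) (i mod b)) \<longleftrightarrow> (\<forall>q<N. \<forall>r<b. P q r)"
proof safe
  fix q r assume "\<forall>i<N*b. P (i div b) (i mod b)" "q < N" "r < b"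
  moreover have "q*b + r < N*b"
  proof -
    have "q*b + r < Suc q * b" using \<open>r < b\<close> by simp
    also have "\<dots> \<le> N*b" using \<open>q < N\<close> by (intro mult_right_mono) simp_all
    finally show ?thesis .
  qed
  moreover have "(q*b + r) div b = q" "(q*b + r) mod b = r" using \<open>r < b\<close> by simp_all
  ultimately show "P q r" by metis
next
  fix i assume "\<forall>q<N. \<forall>r<b. P q r" "i < N*b"
  moreover have "0 < b" using \<open>i < N*b\<close> by (cases b) simp_all
  ultimately show "P (i div b) (i mod b)" by (simp add: less_mult_imp_div_less)
qed

lemma stacked_mat_mult_vec_eq_0_iff:
  assumes F: "\<And>q. q < N \<Longrightarrow> F q \<in> carrier_mat b c" and v: "v \<in> carrier_vec c"
  shows "mat (N*b) c (\<lambda>(i,j). F (i div b) $$ (i mod b, j)) *\<^sub>v v = 0\<^sub>v (N*b)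
    \<longleftrightarrow> (\<forall>q<N. F q *\<^sub>v v = 0\<^sub>v b)"
proof -
  let ?M = "mat (N*b) c (\<lambda>(i,j). F (i div b) $$ (i mod b, j))"
  have "(?M *\<^sub>v v) $ i = (F (i div b) *\<^sub>v v) $ (i mod b)" if "i < N*b" for i
  proof -
    have "0 < b" using that by (cases b) simp_all
    then have "i div b < N" "i mod b < b" using that by (simp_all add: less_mult_imp_div_less)
    with that F[of "i div b"] v show ?thesis by (simp add: scalar_prod_def)
  qed
  then have "?M *\<^sub>v v = 0\<^sub>v (N*b) \<longleftrightarrow> (\<forall>i<N*b. (F (i div b) *\<^sub>v v) $ (i mod b) = 0)"
    by (auto simp: vec_eq_iff)
  also have "\<dots> \<longleftrightarrow> (\<forall>q<N. \<forall>r<b. (F q *\<^sub>v v) $ r = 0)"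
    by (rule all_less_mult_div_mod)
  also have "\<dots> \<longleftrightarrow> (\<forall>q<N. F q *\<^sub>v v = 0\<^sub>v b)"
    using F by (auto simp: vec_eq_iff)
  finally show ?thesis .
qed

lemma mat_kernel_append_rows:
  assumes "A \<in> carrier_mat nr1 nc" and "B \<in> carrier_mat nr2 nc"
  shows "mat_kernel (A @\<^sub>r B) = mat_kernel A \<inter> mat_kernel (B :: 'a :: comm_ring_1 mat)"
proof -
  have AB: "A @\<^sub>r B \<in> carrier_mat (nr1 + nr2) nc" using assms by auto
  have "0\<^sub>v (nr1 + nr2) = (0\<^sub>v nr1 @\<^sub>v 0\<^sub>v nr2 :: 'a vec)" by (intro eq_vecI) auto
  then show ?thesis
    using assms unfolding mat_kernel[OF AB] mat_kernel[OF assms(1)] mat_kernel[OF assms(2)]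
    by (auto simp: mat_mult_append append_vec_eq[of _ nr1])
qed

lemma mat_range_no_cols:
  assumes "A \<in> carrier_mat nr 0"
  shows "mat_range A = {0\<^sub>v nr}"
proof -
  have "w \<in> carrier_vec 0 \<longleftrightarrow> w = 0\<^sub>v 0" for w :: "real vec" by auto
  moreover have "A *\<^sub>v 0\<^sub>v 0 = 0\<^sub>v nr" using assms by (intro eq_vecI) (auto simp: scalar_prod_def)
  ultimately show ?thesis using assms unfolding mat_range_def by auto
qed

lemma orthonormal_cols_le:
  assumes T: "(T :: real mat) \<in> carrier_mat N p" and TT: "transpose_mat T * T = 1\<^sub>m p"
  shows "p \<le> N"
proof (rule ccontr)
  assume "\<not> p \<le> N"
  \<comment> \<open>Pad T with zero rows to a square matrix Z: a one-sided inverse of Z is two-sided,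
    so Z Z^T = 1, which its zero last row forbids.\<close>
  define Z where "Z = mat p p (\<lambda>(i,c). if i < N then T $$ (i,c) else 0)"
  have Z: "Z \<in> carrier_mat p p" by (simp add: Z_def)
  have "transpose_mat Z * Z = transpose_mat T * T"
  proof (rule eq_matI)
    fix c d assume "c < dim_row (transpose_mat T * T)" "d < dim_col (transpose_mat T * T)"
    then have "c < p" "d < p" using T by auto
    then show "(transpose_mat Z * Z) $$ (c,d) = (transpose_mat T * T) $$ (c,d)"
      using T \<open>\<not> p \<le> N\<close>
      by (simp add: Z_def scalar_prod_def sum.atLeastLessThan_concat[of 0 N p, symmetric])
  qed (use T Z in auto)
  with TT have "transpose_mat Z * Z = 1\<^sub>m p" by simp
  moreover have "transpose_mat Z \<in> carrier_mat p p" using Z by simp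
  ultimately have "Z * transpose_mat Z = 1\<^sub>m p" using mat_mult_left_right_inverse Z by blast
  then have "(Z * transpose_mat Z) $$ (p-1, p-1) = 1" using \<open>\<not> p \<le> N\<close> by simp
  moreover have "(Z * transpose_mat Z) $$ (p-1, p-1) = 0"
    using \<open>\<not> p \<le> N\<close> by (simp add: Z_def scalar_prod_def)
  ultimately show False by simp
qed

section \<open>The symplectic matrix\<close>

lemma Sigma_mat_carrier [simp]: "Sigma_mat k \<in> carrier_mat (2*k) (2*k)"
  unfolding Sigma_mat_def by simp

lemma dim_Sigma_mat [simp]: "dim_row (Sigma_mat k) = 2*k" "dim_col (Sigma_mat k) = 2*k"
  unfolding Sigma_mat_def by simp_all

lemma Sigma_mat_mult_vec_carrier [simp]: "Sigma_mat k *\<^sub>v x \<in> carrier_vec (2*k)"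
  unfolding carrier_vec_def by simp

lemma Sigma_mat_mult_vec_index:
  assumes "x \<in> carrier_vec (2*k)" and "i < 2*k"
  shows "(Sigma_mat k *\<^sub>v x) $ i = (if even i then x $ (i+1) else - x $ (i-1))"
proof -
  let ?j = "if even i then i + 1 else i - 1" and ?s = "if even i then 1 else -1 :: real"
  have j: "?j < 2*k" using assms(2) by presburger
  have "(Sigma_mat k *\<^sub>v x) $ i = (\<Sum>j\<in>{0..<2*k}. Sigma_mat k $$ (i,j) * x $ j)"
    using assms by (simp add: scalar_prod_def)
  also have "\<dots> = (\<Sum>j\<in>{0..<2*k}. if j = ?j then ?s * x $ j else 0)"
    using assms by (intro sum.cong) (auto simp: Sigma_mat_def)
  also have "\<dots> = ?s * x $ ?j" using j by simp
  finally show ?thesis by simp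
qed

lemma Sigma_mat_mult_vec_Sigma_mat:
  assumes "x \<in> carrier_vec (2*k)"
  shows "Sigma_mat k *\<^sub>v (Sigma_mat k *\<^sub>v x) = - x"
proof (rule eq_vecI)
  fix i assume "i < dim_vec (- x)"
  then have i: "i < 2*k" using assms by simp
  show "(Sigma_mat k *\<^sub>v (Sigma_mat k *\<^sub>v x)) $ i = (- x) $ i"
  proof (cases "even i")
    case True
    then have "i + 1 < 2*k" using i by presburger
    with True i assms show ?thesis by (simp add: Sigma_mat_mult_vec_index del: index_mult_mat_vec)
  next
    case False
    then have "i - 1 < 2*k" "even (i - 1)" "i - 1 + 1 = i" using i by presburger+
    with False i assms show ?thesis by (simp add: Sigma_mat_mult_vec_index del: index_mult_mat_vec)
  qed
qed (use assms in simp)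

lemma Sigma_mat_mult_vec_eq_0_iff:
  assumes "x \<in> carrier_vec (2*k)"
  shows "Sigma_mat k *\<^sub>v x = 0\<^sub>v (2*k) \<longleftrightarrow> x = 0\<^sub>v (2*k)"
proof
  assume "Sigma_mat k *\<^sub>v x = 0\<^sub>v (2*k)"
  then have "- x = Sigma_mat k *\<^sub>v 0\<^sub>v (2*k)"
    using Sigma_mat_mult_vec_Sigma_mat[OF assms] by simp
  then show "x = 0\<^sub>v (2*k)"
    using assms mult_mat_vec_zero_vec[OF Sigma_mat_carrier] by (simp add: uminus_zero_vec_eq)
qed (simp add: mult_mat_vec_zero_vec)

lemma transpose_Sigma_mat: "transpose_mat (Sigma_mat k) = - Sigma_mat k"
  by (rule eq_matI) (auto simp: Sigma_mat_def)

lemma Sigma_mat_scalar_prod_left: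
  assumes "x \<in> carrier_vec (2*k)" and "y \<in> carrier_vec (2*k)"
  shows "(Sigma_mat k *\<^sub>v x) \<bullet> y = - (x \<bullet> (Sigma_mat k *\<^sub>v y))"
proof -
  have "(Sigma_mat k *\<^sub>v x) \<bullet> y = ((- Sigma_mat k) *\<^sub>v y) \<bullet> x"
    using transpose_vec_mult_scalar[OF Sigma_mat_carrier assms(1,2)] assms
    by (simp add: transpose_Sigma_mat comm_scalar_prod[of _ "2*k"])
  also have "\<dots> = - (x \<bullet> (Sigma_mat k *\<^sub>v y))"
    using assms by (simp add: comm_scalar_prod[of _ "2*k"])
  finally show ?thesis .
qed

lemma scalar_prod_Sigma_mat_self:
  assumes "x \<in> carrier_vec (2*k)"
  shows "x \<bullet> (Sigma_mat k *\<^sub>v x) = 0"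
  using Sigma_mat_scalar_prod_left[OF assms assms] comm_scalar_prod[OF Sigma_mat_mult_vec_carrier assms]
  by simp

lemma col_Sigma_mat:
  assumes "d < 2*k"
  shows "col (Sigma_mat k) d = (if even d then - unit_vec (2*k) (d+1) else unit_vec (2*k) (d-1))"
proof (rule eq_vecI)
  fix i assume "i < dim_vec (if even d then - unit_vec (2*k) (d+1) else unit_vec (2*k) (d-1))"
  then have "i < 2*k" by (simp split: if_splits)
  moreover have "even d \<Longrightarrow> even i \<Longrightarrow> i \<noteq> Suc d" by presburger
  ultimately show "col (Sigma_mat k) d $ i = (if even d then - unit_vec (2*k) (d+1) else unit_vec (2*k) (d-1)) $ i"
    using assms by (cases "even d"; cases "even i") (auto simp: Sigma_mat_def)
qed (use assms in simp)

section \<open>Orthonormal frames adapted to the symplectic matrix\<close>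

definition Sigma_orthonormal :: "nat \<Rightarrow> real vec list \<Rightarrow> bool" where
  "Sigma_orthonormal k xs \<longleftrightarrow> distinct xs \<and> set xs \<subseteq> carrier_vec (2*k) \<and>
     (\<forall>x\<in>set xs. \<forall>y\<in>set xs. x \<bullet> y = (if x = y then 1 else 0) \<and> x \<bullet> (Sigma_mat k *\<^sub>v y) = 0)"

text \<open>The frame of x_1, ..., x_l has columns x_1, - Sigma x_1, x_2, - Sigma x_2, ...; with this
  sign, Sigma_k T = T Sigma_l.\<close>

definition frame_col :: "nat \<Rightarrow> real vec list \<Rightarrow> nat \<Rightarrow> real vec" where
  "frame_col k xs c = (if even c then xs ! (c div 2) else - (Sigma_mat k *\<^sub>v xs ! (c div 2)))"

definition frame_mat :: "nat \<Rightarrow> real vec list \<Rightarrow> real mat" where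
  "frame_mat k xs = mat (2*k) (2 * length xs) (\<lambda>(r,c). frame_col k xs c $ r)"

lemma frame_mat_carrier [simp]: "frame_mat k xs \<in> carrier_mat (2*k) (2 * length xs)"
  unfolding frame_mat_def by simp

lemma dim_frame_mat [simp]: "dim_row (frame_mat k xs) = 2*k" "dim_col (frame_mat k xs) = 2 * length xs"
  unfolding frame_mat_def by simp_all

lemma frame_col_carrier:
  assumes "set xs \<subseteq> carrier_vec (2*k)" and "c < 2 * length xs"
  shows "frame_col k xs c \<in> carrier_vec (2*k)"
  using assms by (auto simp: frame_col_def)

lemma col_frame_mat:
  assumes "set xs \<subseteq> carrier_vec (2*k)" and "c < 2 * length xs"
  shows "col (frame_mat k xs) c = frame_col k xs c"
  using frame_col_carrier[OF assms] assms(2) by (intro eq_vecI) (auto simp: frame_mat_def)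

lemma Sigma_mat_mult_frame_mat:
  assumes xs: "set xs \<subseteq> carrier_vec (2*k)"
  shows "Sigma_mat k * frame_mat k xs = frame_mat k xs * Sigma_mat (length xs)"
proof (rule mat_col_eqI)
  fix d assume "d < dim_col (frame_mat k xs * Sigma_mat (length xs))"
  then have d: "d < 2 * length xs" by simp
  have x: "xs ! (d div 2) \<in> carrier_vec (2*k)" using xs d by auto
  have d': "d + 1 < 2 * length xs" "(d + 1) div 2 = d div 2" if "even d" using d that by presburger+
  have d'': "(d - 1) div 2 = d div 2" "even (d - 1)" if "odd d" using that by presburger+
  have "col (frame_mat k xs * Sigma_mat (length xs)) d = frame_mat k xs *\<^sub>v col (Sigma_mat (length xs)) d"
    using col_mult2[OF frame_mat_carrier Sigma_mat_carrier d] .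
  also have "\<dots> = (if even d then - frame_col k xs (d+1) else frame_col k xs (d-1))"
    using d d' frame_mat_carrier
    by (auto simp: col_Sigma_mat mult_mat_vec_uminus[OF frame_mat_carrier]
        mult_mat_vec_unit_vec[OF frame_mat_carrier] col_frame_mat[OF xs])
  also have "\<dots> = Sigma_mat k *\<^sub>v frame_col k xs d"
    using x d' d''
    by (auto simp: frame_col_def Sigma_mat_mult_vec_Sigma_mat mult_mat_vec_uminus[OF Sigma_mat_carrier])
  also have "\<dots> = col (Sigma_mat k * frame_mat k xs) d"
    by (simp add: col_mult2[OF Sigma_mat_carrier frame_mat_carrier d] col_frame_mat[OF xs d])
  finally show "col (Sigma_mat k * frame_mat k xs) d = col (frame_mat k xs * Sigma_mat (length xs)) d" ..
qed (use frame_mat_carrier in auto)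

lemma Sigma_orthonormalD:
  assumes "Sigma_orthonormal k xs" and "x \<in> set xs" and "y \<in> set xs"
  shows "x \<in> carrier_vec (2*k)" "x \<bullet> y = (if x = y then 1 else 0)" "x \<bullet> (Sigma_mat k *\<^sub>v y) = 0"
    "(Sigma_mat k *\<^sub>v x) \<bullet> y = 0" "(Sigma_mat k *\<^sub>v x) \<bullet> (Sigma_mat k *\<^sub>v y) = (if x = y then 1 else 0)"
proof -
  have "x \<in> carrier_vec (2*k)" "y \<in> carrier_vec (2*k)"
    using assms unfolding Sigma_orthonormal_def by auto
  then show "x \<in> carrier_vec (2*k)" "x \<bullet> y = (if x = y then 1 else 0)" "x \<bullet> (Sigma_mat k *\<^sub>v y) = 0"
    "(Sigma_mat k *\<^sub>v x) \<bullet> y = 0" "(Sigma_mat k *\<^sub>v x) \<bullet> (Sigma_mat k *\<^sub>v y) = (if x = y then 1 else 0)"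
    using assms unfolding Sigma_orthonormal_def
    by (auto simp: Sigma_mat_scalar_prod_left Sigma_mat_mult_vec_Sigma_mat)
qed

lemma frame_col_scalar_prod:
  assumes o: "Sigma_orthonormal k xs" and c: "c < 2 * length xs" and d: "d < 2 * length xs"
  shows "frame_col k xs c \<bullet> frame_col k xs d = (if c = d then 1 else 0)"
proof -
  let ?x = "xs ! (c div 2)" and ?y = "xs ! (d div 2)"
  have xy: "?x \<in> set xs" "?y \<in> set xs" using c d by auto
  have eq: "?x = ?y \<longleftrightarrow> c div 2 = d div 2"
    using o c d by (simp add: Sigma_orthonormal_def nth_eq_iff_index_eq)
  have "c = d \<longleftrightarrow> c div 2 = d div 2 \<and> (even c \<longleftrightarrow> even d)" by presburger
  with eq show ?thesis
    using Sigma_orthonormalD[OF o xy] Sigma_orthonormalD[OF o xy(2,1)] Sigma_orthonormalD(1)[OF o xy(1,1)]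
    by (auto simp: frame_col_def scalar_prod_uminus_left scalar_prod_uminus_right)
qed

lemma transpose_frame_mat_mult_self:
  assumes o: "Sigma_orthonormal k xs"
  shows "transpose_mat (frame_mat k xs) * frame_mat k xs = 1\<^sub>m (2 * length xs)"
proof -
  have xs: "set xs \<subseteq> carrier_vec (2*k)" using o by (simp add: Sigma_orthonormal_def)
  show ?thesis
    by (rule eq_matI) (auto simp: col_frame_mat[OF xs] frame_col_scalar_prod[OF o])
qed

lemma transpose_frame_mat_Sigma_mat:
  assumes o: "Sigma_orthonormal k xs"
  shows "transpose_mat (frame_mat k xs) * Sigma_mat k * frame_mat k xs = Sigma_mat (length xs)"
proof -
  let ?T = "frame_mat k xs"
  have xs: "set xs \<subseteq> carrier_vec (2*k)" using o by (simp add: Sigma_orthonormal_def)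
  have TT: "transpose_mat ?T \<in> carrier_mat (2 * length xs) (2*k)" by simp
  have "transpose_mat ?T * Sigma_mat k * ?T = transpose_mat ?T * (?T * Sigma_mat (length xs))"
    by (simp add: assoc_mult_mat[OF TT Sigma_mat_carrier frame_mat_carrier] Sigma_mat_mult_frame_mat[OF xs])
  also have "\<dots> = Sigma_mat (length xs)"
    by (simp add: assoc_mult_mat[OF TT frame_mat_carrier Sigma_mat_carrier, symmetric]
        transpose_frame_mat_mult_self[OF o])
  finally show ?thesis .
qed

lemma Sigma_orthonormal_length_le: "Sigma_orthonormal k xs \<Longrightarrow> length xs \<le> k"
  using orthonormal_cols_le[OF frame_mat_carrier transpose_frame_mat_mult_self] by simp

lemma Sigma_orthonormal_snoc:
  assumes o: "Sigma_orthonormal k xs" and u: "u \<in> carrier_vec (2*k)" and uu: "u \<bullet> u = 1"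
    and perp: "\<And>x. x \<in> set xs \<Longrightarrow> x \<bullet> u = 0 \<and> (Sigma_mat k *\<^sub>v x) \<bullet> u = 0"
  shows "Sigma_orthonormal k (xs @ [u])"
proof -
  have "u \<notin> set xs" using perp uu by force
  moreover have "x \<bullet> (Sigma_mat k *\<^sub>v u) = 0" "u \<bullet> x = 0" "u \<bullet> (Sigma_mat k *\<^sub>v x) = 0"
    if "x \<in> set xs" for x
    using perp[OF that] Sigma_orthonormalD(1)[OF o that that] u
    by (auto simp: Sigma_mat_scalar_prod_left comm_scalar_prod[of u "2*k"])
  ultimately show ?thesis
    using o u uu perp scalar_prod_Sigma_mat_self[OF u]
    unfolding Sigma_orthonormal_def by auto
qed

lemma transpose_frame_mat_mult_vec_eq_0D:
  assumes o: "Sigma_orthonormal k xs" and u: "u \<in> carrier_vec (2*k)"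
    and Tu: "transpose_mat (frame_mat k xs) *\<^sub>v u = 0\<^sub>v (2 * length xs)" and x: "x \<in> set xs"
  shows "x \<bullet> u = 0 \<and> (Sigma_mat k *\<^sub>v x) \<bullet> u = 0"
proof -
  have xs: "set xs \<subseteq> carrier_vec (2*k)" using o by (simp add: Sigma_orthonormal_def)
  obtain i where i: "i < length xs" and xi: "x = xs ! i" using x by (auto simp: in_set_conv_nth)
  have "frame_col k xs c \<bullet> u = 0" if "c < 2 * length xs" for c
    using arg_cong[OF Tu, of "\<lambda>v. v $ c"] that by (simp add: col_frame_mat[OF xs])
  from this[of "2*i"] this[of "2*i+1"] show ?thesis
    using i xi xs u by (auto simp: frame_col_def)
qed

lemma transpose_frame_mat_mult_residual:
  assumes o: "Sigma_orthonormal k xs" and w: "w \<in> carrier_vec (2*k)"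
  shows "transpose_mat (frame_mat k xs) *\<^sub>v (w - frame_mat k xs *\<^sub>v (transpose_mat (frame_mat k xs) *\<^sub>v w))
    = 0\<^sub>v (2 * length xs)"
proof -
  let ?T = "frame_mat k xs"
  have TT: "transpose_mat ?T \<in> carrier_mat (2 * length xs) (2*k)" by simp
  have y: "transpose_mat ?T *\<^sub>v w \<in> carrier_vec (2 * length xs)" using mult_mat_vec_carrier[OF TT w] .
  have "transpose_mat ?T *\<^sub>v (?T *\<^sub>v (transpose_mat ?T *\<^sub>v w)) = transpose_mat ?T *\<^sub>v w"
    using y by (simp add: assoc_mult_mat_vec[OF TT frame_mat_carrier y, symmetric]
        transpose_frame_mat_mult_self[OF o])
  then show ?thesis
    using y by (simp add: mult_minus_distrib_mat_vec[OF TT w mult_mat_vec_carrier[OF frame_mat_carrier y]])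
qed

lemma mat_range_frame_mat_subset:
  assumes M: "M \<in> carrier_mat r (2*k)"
    and inv: "\<And>v. v \<in> mat_kernel M \<Longrightarrow> Sigma_mat k *\<^sub>v v \<in> mat_kernel M"
    and xs: "set xs \<subseteq> mat_kernel M"
  shows "mat_range (frame_mat k xs) \<subseteq> mat_kernel M"
proof -
  let ?T = "frame_mat k xs"
  have xs': "set xs \<subseteq> carrier_vec (2*k)" using xs mat_kernel_carrier[OF M] by blast
  have "M *\<^sub>v frame_col k xs c = 0\<^sub>v r" if "c < 2 * length xs" for c
  proof -
    have x: "xs ! (c div 2) \<in> mat_kernel M" using xs that by auto
    then show ?thesis
      using mat_kernelD[OF M x] mat_kernelD[OF M inv[OF x]] M
      by (simp add: frame_col_def mult_mat_vec_uminus[OF M])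
  qed
  then have "M * ?T = 0\<^sub>m r (2 * length xs)"
    using M by (intro mat_col_eqI) (auto simp: col_frame_mat[OF xs'] col_mult2[OF M frame_mat_carrier])
  then have "M *\<^sub>v (?T *\<^sub>v w) = 0\<^sub>v r" if "w \<in> carrier_vec (2 * length xs)" for w
    using that by (simp add: assoc_mult_mat_vec[OF M frame_mat_carrier that, symmetric]) (auto intro!: eq_vecI)
  then show ?thesis
    using M unfolding mat_range_def mat_kernel[OF M] by (auto intro: mult_mat_vec_carrier[OF frame_mat_carrier])
qed

lemma Sigma_orthonormal_extend:
  assumes M: "M \<in> carrier_mat r (2*k)"
    and inv: "\<And>v. v \<in> mat_kernel M \<Longrightarrow> Sigma_mat k *\<^sub>v v \<in> mat_kernel M"
    and o: "Sigma_orthonormal k xs" and xs: "set xs \<subseteq> mat_kernel M"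
    and wK: "w \<in> mat_kernel M" and wT: "w \<notin> mat_range (frame_mat k xs)"
  shows "\<exists>x \<in> mat_kernel M. Sigma_orthonormal k (xs @ [x])"
proof -
  let ?T = "frame_mat k xs"
  have w: "w \<in> carrier_vec (2*k)" using mat_kernelD[OF M wK] by simp
  have TT: "transpose_mat ?T \<in> carrier_mat (2 * length xs) (2*k)" by simp
  define y where "y = transpose_mat ?T *\<^sub>v w"
  have y: "y \<in> carrier_vec (2 * length xs)" unfolding y_def using mult_mat_vec_carrier[OF TT w] .
  define u where "u = w - ?T *\<^sub>v y"
  have u: "u \<in> carrier_vec (2*k)" unfolding u_def using w mult_mat_vec_carrier[OF frame_mat_carrier y] by simp
  have "?T *\<^sub>v y \<in> mat_kernel M"
    using mat_range_frame_mat_subset[OF M inv xs] y unfolding mat_range_def by auto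
  then have uK: "u \<in> mat_kernel M"
    using wK M unfolding u_def mat_kernel[OF M]
    by (auto simp: mult_minus_distrib_mat_vec[OF M])
  have "u \<noteq> 0\<^sub>v (2*k)"
  proof
    assume "u = 0\<^sub>v (2*k)"
    then have "w = ?T *\<^sub>v y" using w unfolding u_def by (auto simp: vec_eq_iff)
    then show False using wT y unfolding mat_range_def by auto
  qed
  then have "u \<bullet> u > 0"
    using conjugate_square_greater_0_vec[OF u] by simp
  define x where "x = (1 / sqrt (u \<bullet> u)) \<cdot>\<^sub>v u"
  have "x \<bullet> x = 1" using \<open>u \<bullet> u > 0\<close> u by (simp add: x_def power2_eq_square[symmetric])
  moreover have "x \<in> mat_kernel M" unfolding x_def by (rule mat_kernel_smult[OF M uK])
  moreover have "z \<bullet> x = 0 \<and> (Sigma_mat k *\<^sub>v z) \<bullet> x = 0" if "z \<in> set xs" for z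
  proof -
    have "z \<bullet> u = 0 \<and> (Sigma_mat k *\<^sub>v z) \<bullet> u = 0"
      using transpose_frame_mat_mult_vec_eq_0D[OF o u _ that] transpose_frame_mat_mult_residual[OF o w]
      by (simp add: u_def y_def)
    then show ?thesis
      using u Sigma_orthonormalD(1)[OF o that that] by (simp add: x_def)
  qed
  moreover have "x \<in> carrier_vec (2*k)" using u by (simp add: x_def)
  ultimately show ?thesis
    using Sigma_orthonormal_snoc[OF o] by blast
qed

lemma Sigma_orthonormal_frame_exists:
  assumes M: "M \<in> carrier_mat r (2*k)"
    and inv: "\<And>v. v \<in> mat_kernel M \<Longrightarrow> Sigma_mat k *\<^sub>v v \<in> mat_kernel M"
  shows "\<exists>xs. Sigma_orthonormal k xs \<and> mat_range (frame_mat k xs) = mat_kernel M"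
proof -
  have "\<exists>ys. Sigma_orthonormal k ys \<and> mat_range (frame_mat k ys) = mat_kernel M"
    if "Sigma_orthonormal k xs" "set xs \<subseteq> mat_kernel M" for xs
    using that
  proof (induction "k - length xs" arbitrary: xs rule: less_induct)
    case less
    show ?case
    proof (cases "mat_kernel M \<subseteq> mat_range (frame_mat k xs)")
      case True
      then show ?thesis
        using less.prems mat_range_frame_mat_subset[OF M inv less.prems(2)] by blast
    next
      case False
      then obtain w where "w \<in> mat_kernel M" "w \<notin> mat_range (frame_mat k xs)" by blast
      then obtain x where x: "x \<in> mat_kernel M" and o: "Sigma_orthonormal k (xs @ [x])"
        using Sigma_orthonormal_extend[OF M inv less.prems] by blast
      have "k - length (xs @ [x]) < k - length xs"
        using Sigma_orthonormal_length_le[OF o] by simp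
      then show ?thesis using less.hyps[OF _ o] less.prems(2) x by auto
    qed
  qed
  moreover have "Sigma_orthonormal k []" by (simp add: Sigma_orthonormal_def)
  ultimately show ?thesis by fastforce
qed

section \<open>Linear quantum systems\<close>

locale linear_quantum_system =
  fixes n m :: nat and G C :: "real mat"
  assumes G_carrier: "G \<in> carrier_mat (2*n) (2*n)" and G_symmetric: "transpose_mat G = G"
    and C_carrier: "C \<in> carrier_mat (2*m) (2*n)"
begin

abbreviation "S \<equiv> Sigma_mat n"
abbreviation "A \<equiv> drift_mat n m G C"
abbreviation "P \<equiv> transpose_mat C * Sigma_mat m * C"

lemma P_carrier: "P \<in> carrier_mat (2*n) (2*n)"
  using C_carrier by (auto intro!: mult_carrier_mat)

lemma drift_mat_carrier: "A \<in> carrier_mat (2*n) (2*n)"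
  using G_carrier P_carrier unfolding drift_mat_def by (auto intro!: mult_carrier_mat)

lemma dim_drift_mat [simp]: "dim_row A = 2*n" "dim_col A = 2*n"
  using drift_mat_carrier by auto

lemma transpose_P: "transpose_mat P = - P"
proof -
  have CT: "transpose_mat C \<in> carrier_mat (2*n) (2*m)" using C_carrier by simp
  have "transpose_mat P = transpose_mat C * (transpose_mat (Sigma_mat m) * C)"
    using C_carrier CT by (simp add: transpose_mult[of _ "2*n" "2*m"] transpose_mult[OF CT Sigma_mat_carrier])
  also have "\<dots> = - P"
    using C_carrier CT by (simp add: transpose_Sigma_mat assoc_mult_mat[OF CT Sigma_mat_carrier C_carrier])
  finally show ?thesis .
qed

lemma P_mult_vec_eq_0:
  assumes "y \<in> carrier_vec (2*n)" and "C *\<^sub>v y = 0\<^sub>v (2*m)"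
  shows "P *\<^sub>v y = 0\<^sub>v (2*n)"
proof -
  have CS: "transpose_mat C * Sigma_mat m \<in> carrier_mat (2*n) (2*m)"
    using C_carrier by (auto intro!: mult_carrier_mat)
  show ?thesis
    using assms C_carrier by (simp add: assoc_mult_mat_vec[OF CS C_carrier] mult_mat_vec_zero_vec[OF CS])
qed

lemma drift_mat_mult_vec:
  assumes y: "y \<in> carrier_vec (2*n)" and Cy: "C *\<^sub>v y = 0\<^sub>v (2*m)"
  shows "A *\<^sub>v y = S *\<^sub>v (G *\<^sub>v y)"
proof -
  have "(G + (1/2) \<cdot>\<^sub>m P) *\<^sub>v y = G *\<^sub>v y"
    using y G_carrier P_carrier P_mult_vec_eq_0[OF y Cy]
    by (auto simp: add_mult_distrib_mat_vec[of _ "2*n" "2*n"] smult_mat_mult_vec[OF P_carrier]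
        intro!: eq_vecI)
  then show ?thesis
    using y G_carrier P_carrier unfolding drift_mat_def
    by (simp add: assoc_mult_mat_vec[of _ "2*n" "2*n" _ "2*n"])
qed

lemma transpose_drift_mat_mult_vec:
  assumes w: "w \<in> carrier_vec (2*n)" and CSw: "C *\<^sub>v (S *\<^sub>v w) = 0\<^sub>v (2*m)"
  shows "transpose_mat A *\<^sub>v w = - (G *\<^sub>v (S *\<^sub>v w))"
proof -
  have H: "G + (1/2) \<cdot>\<^sub>m P \<in> carrier_mat (2*n) (2*n)" using G_carrier P_carrier by simp
  have H': "G - (1/2) \<cdot>\<^sub>m P \<in> carrier_mat (2*n) (2*n)" using P_carrier by (simp add: minus_carrier_mat)
  have "G + (1/2) \<cdot>\<^sub>m (- P) = G - (1/2) \<cdot>\<^sub>m P"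
    using G_carrier P_carrier by (intro eq_matI) auto
  then have "transpose_mat A = (G - (1/2) \<cdot>\<^sub>m P) * (- S)"
    using G_carrier P_carrier
    by (simp add: drift_mat_def transpose_mult[OF Sigma_mat_carrier H] transpose_add[of _ "2*n" "2*n"]
        transpose_smult_mat G_symmetric transpose_P transpose_Sigma_mat)
  then have "transpose_mat A *\<^sub>v w = - ((G - (1/2) \<cdot>\<^sub>m P) *\<^sub>v (S *\<^sub>v w))"
    using w by (simp add: assoc_mult_mat_vec[OF H' _ w] mult_mat_vec_uminus[OF H'])
  also have "(G - (1/2) \<cdot>\<^sub>m P) *\<^sub>v (S *\<^sub>v w) = G *\<^sub>v (S *\<^sub>v w)"
    using G_carrier P_carrier P_mult_vec_eq_0[OF _ CSw]
    by (auto simp: minus_mult_distrib_mat_vec[of _ "2*n" "2*n"] smult_mat_mult_vec[OF P_carrier]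
        intro!: eq_vecI)
  finally show ?thesis .
qed

lemma Sigma_transpose_drift_mult_vec:
  assumes w: "w \<in> carrier_vec (2*n)" and CSw: "C *\<^sub>v (S *\<^sub>v w) = 0\<^sub>v (2*m)"
  shows "S *\<^sub>v (transpose_mat A *\<^sub>v w) = - (A *\<^sub>v (S *\<^sub>v w))"
  using G_carrier by (simp add: transpose_drift_mat_mult_vec[OF w CSw] drift_mat_mult_vec[OF _ CSw]
      mult_mat_vec_uminus[OF Sigma_mat_carrier])

lemma Sigma_transpose_drift_pow_mult_vec:
  assumes "v \<in> carrier_vec (2*n)"
    and "\<forall>j<q. C *\<^sub>v (S *\<^sub>v (transpose_mat A ^\<^sub>m j *\<^sub>v v)) = 0\<^sub>v (2*m)"
  shows "S *\<^sub>v (transpose_mat A ^\<^sub>m q *\<^sub>v v) = (-1) ^ q \<cdot>\<^sub>v (A ^\<^sub>m q *\<^sub>v (S *\<^sub>v v))"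
  using assms
proof (induction q arbitrary: v)
  case 0
  then show ?case by simp
next
  case (Suc q)
  have AT: "transpose_mat A \<in> carrier_mat (2*n) (2*n)" using drift_mat_carrier by simp
  have v': "transpose_mat A *\<^sub>v v \<in> carrier_vec (2*n)" using AT Suc.prems(1) by simp
  have "\<forall>j<q. C *\<^sub>v (S *\<^sub>v (transpose_mat A ^\<^sub>m j *\<^sub>v (transpose_mat A *\<^sub>v v))) = 0\<^sub>v (2*m)"
    using Suc.prems pow_mat_Suc_mult_vec[OF AT Suc.prems(1)] by (metis Suc_mono)
  then have "S *\<^sub>v (transpose_mat A ^\<^sub>m Suc q *\<^sub>v v)
      = (-1) ^ q \<cdot>\<^sub>v (A ^\<^sub>m q *\<^sub>v (S *\<^sub>v (transpose_mat A *\<^sub>v v)))"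
    unfolding pow_mat_Suc_mult_vec[OF AT Suc.prems(1)] by (rule Suc.IH[OF v'])
  also have "S *\<^sub>v (transpose_mat A *\<^sub>v v) = - (A *\<^sub>v (S *\<^sub>v v))"
    using Suc.prems by (intro Sigma_transpose_drift_mult_vec) auto
  also have "(-1) ^ q \<cdot>\<^sub>v (A ^\<^sub>m q *\<^sub>v - (A *\<^sub>v (S *\<^sub>v v))) = (-1) ^ Suc q \<cdot>\<^sub>v (A ^\<^sub>m Suc q *\<^sub>v (S *\<^sub>v v))"
    unfolding pow_mat_Suc_mult_vec[OF drift_mat_carrier Sigma_mat_mult_vec_carrier]
    using drift_mat_carrier by (auto simp: mult_mat_vec_uminus[of _ "2*n" "2*n"] intro!: eq_vecI)
  finally show ?case .
qed

lemma unobservable_Sigma_transpose_drift_iff: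
  assumes v: "v \<in> carrier_vec (2*n)"
  shows "(\<forall>q<N. C *\<^sub>v (S *\<^sub>v (transpose_mat A ^\<^sub>m q *\<^sub>v v)) = 0\<^sub>v (2*m))
    \<longleftrightarrow> (\<forall>q<N. C *\<^sub>v (A ^\<^sub>m q *\<^sub>v (S *\<^sub>v v)) = 0\<^sub>v (2*m))"
proof (induction N)
  case 0
  then show ?case by simp
next
  case (Suc N)
  have "C *\<^sub>v (S *\<^sub>v (transpose_mat A ^\<^sub>m N *\<^sub>v v)) = 0\<^sub>v (2*m)
      \<longleftrightarrow> C *\<^sub>v (A ^\<^sub>m N *\<^sub>v (S *\<^sub>v v)) = 0\<^sub>v (2*m)"
    if "\<forall>q<N. C *\<^sub>v (S *\<^sub>v (transpose_mat A ^\<^sub>m q *\<^sub>v v)) = 0\<^sub>v (2*m)"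
  proof -
    have "A ^\<^sub>m N *\<^sub>v (S *\<^sub>v v) \<in> carrier_vec (2*n)"
      using drift_mat_carrier by (auto intro: mult_mat_vec_carrier pow_carrier_mat)
    then show ?thesis
      using Sigma_transpose_drift_pow_mult_vec[OF v that] C_carrier
      by (simp add: mult_mat_vec[OF C_carrier] smult_vec_eq_0_iff)
  qed
  with Suc.IH show ?case by (auto simp: less_Suc_eq)
qed

abbreviation "Ob \<equiv> obsv_mat n m G C"
abbreviation "Ct \<equiv> ctrb_mat n m G C"

lemma obsv_mat_carrier: "Ob \<in> carrier_mat (2*n*(2*m)) (2*n)"
  unfolding obsv_mat_def by simp

lemma obsv_Sigma_mat_carrier: "Ob * S \<in> carrier_mat (2*n*(2*m)) (2*n)"
  using obsv_mat_carrier by (auto intro: mult_carrier_mat)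

lemma obsv_mat_mult_vec_eq_0_iff:
  assumes v: "v \<in> carrier_vec (2*n)"
  shows "Ob *\<^sub>v v = 0\<^sub>v (2*n*(2*m)) \<longleftrightarrow> (\<forall>q<2*n. C *\<^sub>v (A ^\<^sub>m q *\<^sub>v v) = 0\<^sub>v (2*m))"
proof -
  have F: "C * A ^\<^sub>m q \<in> carrier_mat (2*m) (2*n)" for q
    using C_carrier drift_mat_carrier by (auto intro: mult_carrier_mat pow_carrier_mat)
  show ?thesis
    unfolding obsv_mat_def stacked_mat_mult_vec_eq_0_iff[where F = "\<lambda>q. C * A ^\<^sub>m q", OF F v]
    using C_carrier drift_mat_carrier v by (simp add: assoc_mult_mat_vec[of _ "2*m" "2*n" _ "2*n"])
qed

lemma transpose_input_mat_mult_vec: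
  assumes w: "w \<in> carrier_vec (2*n)"
  shows "transpose_mat (input_mat n m C) *\<^sub>v w = Sigma_mat m *\<^sub>v (C *\<^sub>v (S *\<^sub>v w))"
proof -
  have CT: "transpose_mat C \<in> carrier_mat (2*n) (2*m)" using C_carrier by simp
  have SC: "S * transpose_mat C \<in> carrier_mat (2*n) (2*m)" using CT by (auto intro: mult_carrier_mat)
  have "transpose_mat (input_mat n m C) = - Sigma_mat m * (C * - S)"
    unfolding input_mat_def
    by (simp add: transpose_mult[OF SC Sigma_mat_carrier] transpose_mult[OF Sigma_mat_carrier CT]
        transpose_Sigma_mat)
  then show ?thesis
    using w C_carrier by (simp add: assoc_mult_mat_vec[of _ "2*m" "2*n" _ "2*n"]
        assoc_mult_mat_vec[of _ "2*m" "2*m" _ "2*n"] mult_mat_vec_uminus[of _ "2*m" "2*n"])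
qed

lemma transpose_ctrb_mat_mult_vec_eq_0_iff:
  assumes v: "v \<in> carrier_vec (2*n)"
  shows "transpose_mat Ct *\<^sub>v v = 0\<^sub>v (2*n*(2*m))
    \<longleftrightarrow> (\<forall>q<2*n. C *\<^sub>v (S *\<^sub>v (transpose_mat A ^\<^sub>m q *\<^sub>v v)) = 0\<^sub>v (2*m))"
proof -
  have B: "input_mat n m C \<in> carrier_mat (2*n) (2*m)"
    using C_carrier unfolding input_mat_def by (auto intro!: mult_carrier_mat)
  let ?F = "\<lambda>q. transpose_mat (A ^\<^sub>m q * input_mat n m C)"
  have F: "?F q \<in> carrier_mat (2*m) (2*n)" for q
    using B drift_mat_carrier by (auto intro: mult_carrier_mat pow_carrier_mat)
  let ?M = "mat (2*n*(2*m)) (2*n) (\<lambda>(i,j). ?F (i div (2*m)) $$ (i mod (2*m), j))"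
  have Ct: "transpose_mat Ct = ?M"
  proof (rule eq_matI)
    fix i j assume "i < dim_row ?M" and "j < dim_col ?M"
    then have "i < 2*n*(2*m)" "j < 2*n" by simp_all
    moreover from this have "i mod (2*m) < 2*m" by (cases m) simp_all
    ultimately show "transpose_mat Ct $$ (i,j) = ?M $$ (i,j)"
      using carrier_matD[OF B] by (simp add: ctrb_mat_def)
  qed (simp_all add: ctrb_mat_def)
  have F_mult: "?F q *\<^sub>v v = Sigma_mat m *\<^sub>v (C *\<^sub>v (S *\<^sub>v (transpose_mat A ^\<^sub>m q *\<^sub>v v)))" for q
  proof -
    have ATq: "transpose_mat A ^\<^sub>m q \<in> carrier_mat (2*n) (2*n)"
      using drift_mat_carrier by (auto intro: pow_carrier_mat)
    have "?F q = transpose_mat (input_mat n m C) * transpose_mat A ^\<^sub>m q"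
      using B drift_mat_carrier
      by (simp add: transpose_mult[of _ "2*n" "2*n"] transpose_pow_mat[OF drift_mat_carrier] pow_carrier_mat)
    then show ?thesis
      using ATq B v by (simp add: assoc_mult_mat_vec[of _ "2*m" "2*n" _ "2*n"] transpose_input_mat_mult_vec)
  qed
  show ?thesis
    unfolding Ct stacked_mat_mult_vec_eq_0_iff[where F = ?F, OF F v] F_mult
    using C_carrier by (simp add: Sigma_mat_mult_vec_eq_0_iff)
qed

lemma mat_kernel_transpose_ctrb_mat: "mat_kernel (transpose_mat Ct) = mat_kernel (Ob * S)"
proof -
  have Ct: "transpose_mat Ct \<in> carrier_mat (2*n*(2*m)) (2*n)" by (simp add: ctrb_mat_def)
  have "transpose_mat Ct *\<^sub>v v = 0\<^sub>v (2*n*(2*m)) \<longleftrightarrow> (Ob * S) *\<^sub>v v = 0\<^sub>v (2*n*(2*m))"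
    if v: "v \<in> carrier_vec (2*n)" for v
    unfolding transpose_ctrb_mat_mult_vec_eq_0_iff[OF v] unobservable_Sigma_transpose_drift_iff[OF v]
      assoc_mult_mat_vec[OF obsv_mat_carrier Sigma_mat_carrier v]
      obsv_mat_mult_vec_eq_0_iff[OF Sigma_mat_mult_vec_carrier] ..
  then show ?thesis
    unfolding mat_kernel[OF Ct] mat_kernel[OF obsv_Sigma_mat_carrier] by blast
qed

abbreviation "DF_kernel \<equiv> mat_kernel Ob \<inter> mat_kernel (Ob * S)"

lemma Sigma_mat_mult_vec_mem_DF_kernel:
  assumes "v \<in> DF_kernel"
  shows "S *\<^sub>v v \<in> DF_kernel"
proof -
  have v: "v \<in> carrier_vec (2*n)" and "Ob *\<^sub>v v = 0\<^sub>v (2*n*(2*m))" "Ob *\<^sub>v (S *\<^sub>v v) = 0\<^sub>v (2*n*(2*m))"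
    using assms unfolding mat_kernel[OF obsv_mat_carrier] mat_kernel[OF obsv_Sigma_mat_carrier]
    by (auto simp: assoc_mult_mat_vec[OF obsv_mat_carrier Sigma_mat_carrier])
  then show ?thesis
    unfolding mat_kernel[OF obsv_mat_carrier] mat_kernel[OF obsv_Sigma_mat_carrier]
    by (simp add: assoc_mult_mat_vec[OF obsv_mat_carrier Sigma_mat_carrier] Sigma_mat_mult_vec_Sigma_mat
        mult_mat_vec_uminus[OF obsv_mat_carrier])
qed


lemma DF_kernel_nontrivial: 
  assumes "has_DF_subsystem n m G C"
  shows "DF_kernel \<noteq> {0\<^sub>v (2*n)}"
proof -
  obtain l T where "is_DF_mode n m G C l T" using assms unfolding has_DF_subsystem_def by blast
  then have "col T 0 \<noteq> 0\<^sub>v (2*n)" "col T 0 \<in> DF_kernel"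
    unfolding is_DF_mode_def mat_kernel_transpose_ctrb_mat by auto
  then show ?thesis by blast
qed

lemma DF_mode_exists:
  assumes "DF_kernel \<noteq> {0\<^sub>v (2*n)}"
  shows "\<exists>l T. l \<ge> 1 \<and> T \<in> carrier_mat (2*n) (2*l) \<and> mat_range T = DF_kernel \<and>
    transpose_mat T * S * T = Sigma_mat l \<and> is_DF_mode n m G C l T"
proof -
  have K: "DF_kernel = mat_kernel (Ob @\<^sub>r Ob * S)"
    by (rule mat_kernel_append_rows[OF obsv_mat_carrier obsv_Sigma_mat_carrier, symmetric])
  have M: "Ob @\<^sub>r Ob * S \<in> carrier_mat (2*n*(2*m) + 2*n*(2*m)) (2*n)"
    using carrier_append_rows[OF obsv_mat_carrier obsv_Sigma_mat_carrier] .
  have inv: "S *\<^sub>v v \<in> mat_kernel (Ob @\<^sub>r Ob * S)" if "v \<in> mat_kernel (Ob @\<^sub>r Ob * S)" for v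
    using Sigma_mat_mult_vec_mem_DF_kernel that unfolding K .
  obtain xs where o: "Sigma_orthonormal n xs" and range: "mat_range (frame_mat n xs) = DF_kernel"
    using Sigma_orthonormal_frame_exists[OF M inv] unfolding K by blast
  let ?T = "frame_mat n xs" and ?l = "length xs"
  have "xs \<noteq> []"
  proof
    assume "xs = []"
    moreover have "frame_mat n [] \<in> carrier_mat (2*n) 0" using frame_mat_carrier[of n "[]"] by simp
    ultimately show False using assms range mat_range_no_cols by metis
  qed
  then have l: "?l \<ge> 1" by (simp add: Suc_le_eq)
  have "col ?T j \<noteq> 0\<^sub>v (2*n) \<and> col ?T j \<in> DF_kernel" if "j < 2 * ?l" for j
  proof
    have "col ?T j \<bullet> col ?T j = 1"
      using arg_cong[OF transpose_frame_mat_mult_self[OF o], of "\<lambda>X. X $$ (j,j)"] that by simp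
    then show "col ?T j \<noteq> 0\<^sub>v (2*n)" by (metis scalar_prod_left_zero zero_carrier_vec zero_neq_one)
    have "?T *\<^sub>v unit_vec (2 * ?l) j \<in> mat_range ?T" unfolding mat_range_def by auto
    then show "col ?T j \<in> DF_kernel"
      using range mult_mat_vec_unit_vec[OF frame_mat_carrier that] by simp
  qed
  then have "is_DF_mode n m G C ?l ?T"
    using l transpose_frame_mat_Sigma_mat[OF o]
    unfolding is_DF_mode_def mat_kernel_transpose_ctrb_mat by auto
  then show ?thesis
    using l range transpose_frame_mat_Sigma_mat[OF o] frame_mat_carrier[of n xs]
    by (intro exI[of _ ?l] exI[of _ ?T]) simp
qed

end

theorem theorem1:
  fixes n m :: nat and G C :: "real mat"
  assumes "n \<ge> 1" and "m \<ge> 1"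
    and "G \<in> carrier_mat (2*n) (2*n)" and "transpose_mat G = G"
    and "C \<in> carrier_mat (2*m) (2*n)"
  shows "(has_DF_subsystem n m G C \<longleftrightarrow>
           mat_kernel (obsv_mat n m G C) \<inter> mat_kernel (obsv_mat n m G C * Sigma_mat n)
             \<noteq> {0\<^sub>v (2*n)})
       \<and> (has_DF_subsystem n m G C \<longrightarrow>
           (\<exists>l T1. l \<ge> 1 \<and> T1 \<in> carrier_mat (2*n) (2*l) \<and>
              mat_range T1 = mat_kernel (obsv_mat n m G C) \<inter> mat_kernel (obsv_mat n m G C * Sigma_mat n) \<and>
              transpose_mat T1 * Sigma_mat n * T1 = Sigma_mat l \<and>
              is_DF_mode n m G C l T1))"
proof -
  interpret linear_quantum_system n m G C
    using assms(3-5) by unfold_locales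
  have iff: "has_DF_subsystem n m G C \<longleftrightarrow> DF_kernel \<noteq> {0\<^sub>v (2*n)}"
    using DF_kernel_nontrivial DF_mode_exists unfolding has_DF_subsystem_def by blast
  show ?thesis
    using DF_mode_exists unfolding iff by (intro conjI impI) blast+
qed

end
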